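(* Let $n\ge5$. There is a reciprocal recommendation task with $n$ users such that, for every $\alpha<1$ and every maximizer $u^\alpha$ of $W_\alpha$ over $\mathcal U$, and for every choice of $u^{\mathrm{eq},\beta}\in\mathcal U^{\mathrm{eq}}_\beta$ ($\beta>0$): (i) there exists $\beta>0$ such that $u^\alpha_i>u^{\mathrm{eq},\beta}_i$ for all $i\in[n]$; (ii) $\lim_{\beta\to\infty}\sum_{i=1}^n u^{\mathrm{eq},\beta}_i=0$.
   Context: Reciprocal recommendation task: $n$ users $[n]$ who are also the items, a symmetric matrix of mutual preference values $\mu_{ij}=\mu_{ji}\ge0$ ($i\neq j$), and exposure weights $v\in\mathbb R^{n-1}$ with $v_1\ge\dots\ge v_{n-1}\ge0$. Each user $i$ receives a stochastic ranking of the other users: a ranking tensor is $P=(P_{ijk})$, $i\in[n]$, $j\in[n]\setminus\{i\}$, $k\in[n-1]$, such that each $(P_{ijk})_{j,k}$ is doubly stochastic; $\mathcal P$ is the set of ranking tensors; $P_{ij}v=\sum_kP_{ijk}v_k$. The (two-sided) utility of user $i$ is $u_i(P)=\sum_{j\ne i}\mu_{ij}P_{ij}v+\sum_{j\neq i}\mu_{ij}P_{ji}v$; $\mathcal U=\{(u_i(P))_{i\in[n]}:P\in\mathcal P\}$. Welfare: $\psi(x,\alpha)=x^\alpha$ ($\alpha>0$), $\log x$ ($\alpha=0$), $-x^\alpha$ ($\alpha<0$), with $\psi(0,\alpha)=-\infty$ for $\alpha\le0$; $W_\alpha(u)=\sum_{i=1}^n\psi(u_i,\alpha)$. Equality of utility: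 $D(u)=\frac1n\sum_{j=1}^n\big(u_j-\frac1n\sum_{j'=1}^nu_{j'}\big)^2$, $F^{\mathrm{eq}}_\beta(u)=\sum_{i=1}^nu_i-\beta\sqrt{D(u)}$, $\mathcal U^{\mathrm{eq}}_\beta=\arg\max_{u\in\mathcal U}F^{\mathrm{eq}}_\beta(u)$. *)

theory Defs
  imports "HOL-Analysis.Analysis" "HOL-Library.Extended_Real"
begin

definition rr_task :: "nat \<Rightarrow> (nat \<Rightarrow> nat \<Rightarrow> real) \<Rightarrow> (nat \<Rightarrow> real) \<Rightarrow> bool" where
  "rr_task n mu v \<longleftrightarrow>
     (\<forall>i\<in>{1..n}. \<forall>j\<in>{1..n}. i \<noteq> j \<longrightarrow> mu i j = mu j i \<and> mu i j \<ge> 0) \<and>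
     (\<forall>k\<in>{1..n-1}. v k \<ge> 0) \<and>
     (\<forall>k l. 1 \<le> k \<longrightarrow> k \<le> l \<longrightarrow> l \<le> n - 1 \<longrightarrow> v l \<le> v k)"

definition ranking_tensor :: "nat \<Rightarrow> (nat \<Rightarrow> nat \<Rightarrow> nat \<Rightarrow> real) \<Rightarrow> bool" where
  "ranking_tensor n P \<longleftrightarrow>
     (\<forall>i\<in>{1..n}.
        (\<forall>j\<in>{1..n} - {i}. \<forall>k\<in>{1..n-1}. P i j k \<ge> 0) \<and>
        (\<forall>j\<in>{1..n} - {i}. (\<Sum>k\<in>{1..n-1}. P i j k) = 1) \<and>
        (\<forall>k\<in>{1..n-1}. (\<Sum>j\<in>{1..n} - {i}. P i j k) = 1))"

definition expo :: "nat \<Rightarrow> (nat \<Rightarrow> real) \<Rightarrow> (nat \<Rightarrow> nat \<Rightarrow> nat \<Rightarrow> real) \<Rightarrow> nat \<Rightarrow> nat \<Rightarrow> real" where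
  "expo n v P i j = (\<Sum>k\<in>{1..n-1}. P i j k * v k)"

definition utility :: "nat \<Rightarrow> (nat \<Rightarrow> nat \<Rightarrow> real) \<Rightarrow> (nat \<Rightarrow> real)
    \<Rightarrow> (nat \<Rightarrow> nat \<Rightarrow> nat \<Rightarrow> real) \<Rightarrow> nat \<Rightarrow> real" where
  "utility n mu v P i =
     (\<Sum>j\<in>{1..n} - {i}. mu i j * expo n v P i j) + (\<Sum>j\<in>{1..n} - {i}. mu i j * expo n v P j i)"

text \<open>The set U of achievable utility vectors (vectors are functions, set to 0 outside [n]).\<close>
definition util_set :: "nat \<Rightarrow> (nat \<Rightarrow> nat \<Rightarrow> real) \<Rightarrow> (nat \<Rightarrow> real) \<Rightarrow> (nat \<Rightarrow> real) set" where
  "util_set n mu v = {u. \<exists>P. ranking_tensor n P \<and>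
       (\<forall>i. u i = (if i \<in> {1..n} then utility n mu v P i else 0))}"

definition psi :: "real \<Rightarrow> real \<Rightarrow> ereal" where
  "psi x \<alpha> =
     (if \<alpha> > 0 then ereal (x powr \<alpha>)
      else if x = 0 then -\<infinity>
      else if \<alpha> = 0 then ereal (ln x)
      else ereal (- (x powr \<alpha>)))"

definition welfare :: "nat \<Rightarrow> real \<Rightarrow> (nat \<Rightarrow> real) \<Rightarrow> ereal" where
  "welfare n \<alpha> u = (\<Sum>i\<in>{1..n}. psi (u i) \<alpha>)"

definition welfare_maximizer :: "nat \<Rightarrow> (nat \<Rightarrow> nat \<Rightarrow> real) \<Rightarrow> (nat \<Rightarrow> real) \<Rightarrow> real
    \<Rightarrow> (nat \<Rightarrow> real) \<Rightarrow> bool" where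
  "welfare_maximizer n mu v \<alpha> u \<longleftrightarrow>
     u \<in> util_set n mu v \<and> (\<forall>u'\<in>util_set n mu v. welfare n \<alpha> u' \<le> welfare n \<alpha> u)"

definition disp :: "nat \<Rightarrow> (nat \<Rightarrow> real) \<Rightarrow> real" where
  "disp n u = (1 / real n) * (\<Sum>j\<in>{1..n}. (u j - (1 / real n) * (\<Sum>j'\<in>{1..n}. u j')) ^ 2)"

definition F_eq :: "nat \<Rightarrow> real \<Rightarrow> (nat \<Rightarrow> real) \<Rightarrow> real" where
  "F_eq n \<beta> u = (\<Sum>i\<in>{1..n}. u i) - \<beta> * sqrt (disp n u)"

definition eq_opt_set :: "nat \<Rightarrow> (nat \<Rightarrow> nat \<Rightarrow> real) \<Rightarrow> (nat \<Rightarrow> real) \<Rightarrow> real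
    \<Rightarrow> (nat \<Rightarrow> real) set" where
  "eq_opt_set n mu v \<beta> = {u \<in> util_set n mu v. \<forall>u'\<in>util_set n mu v. F_eq n \<beta> u' \<le> F_eq n \<beta> u}"

end

theory Submission
  imports Defs "HOL-Combinatorics.Transposition"
begin

(* Users 1 and 2 value exactly users 3..n and vice versa, and only the top position of a ranking
   carries exposure.  Each recommendation between the two groups then counts once on each side, so
   users 1 and 2 always hold half of the total utility S; this forces a dispersion of order
   S^2 / n^3, so for large beta the zero vector, which is feasible, is the only maximiser of the
   equality objective.  Welfare maximisers for alpha < 1, on the other hand, are strictly positive:
   the utility set is convex and contains a positive vector, while psi is -infinity at 0 (alpha <= 0)
   or has infinite slope there (0 < alpha < 1). *)

lemma ranking_tensor_convex_comb:
  assumes "ranking_tensor n P" "ranking_tensor n Q" "0 \<le> t" "t \<le> 1"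
  shows "ranking_tensor n (\<lambda>i j k. (1 - t) * P i j k + t * Q i j k)"
  using assms unfolding ranking_tensor_def
  by (auto simp: sum.distrib sum_distrib_left[symmetric])

lemma expo_convex_comb:
  "expo n v (\<lambda>i j k. (1 - t) * P i j k + t * Q i j k) i j
     = (1 - t) * expo n v P i j + t * expo n v Q i j"
  unfolding expo_def by (simp add: distrib_right sum.distrib sum_distrib_left mult.assoc)

lemma utility_convex_comb:
  "utility n mu v (\<lambda>i j k. (1 - t) * P i j k + t * Q i j k) i
     = (1 - t) * utility n mu v P i + t * utility n mu v Q i"
  unfolding utility_def expo_convex_comb
  by (simp add: distrib_left sum.distrib sum_distrib_left mult.left_commute)

lemma util_set_convex:
  assumes "u \<in> util_set n mu v" "w \<in> util_set n mu v" "0 \<le> t" "t \<le> 1"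
  shows "(\<lambda>i. (1 - t) * u i + t * w i) \<in> util_set n mu v"
proof -
  obtain P where P: "ranking_tensor n P" "\<forall>i. u i = (if i \<in> {1..n} then utility n mu v P i else 0)"
    using assms(1) unfolding util_set_def by blast
  obtain Q where Q: "ranking_tensor n Q" "\<forall>i. w i = (if i \<in> {1..n} then utility n mu v Q i else 0)"
    using assms(2) unfolding util_set_def by blast
  show ?thesis
    unfolding util_set_def
    using ranking_tensor_convex_comb[OF P(1) Q(1) assms(3,4)] P(2) Q(2)
    by (auto simp: utility_convex_comb)
qed

lemma util_set_nonneg:
  assumes "rr_task n mu v" "u \<in> util_set n mu v"
  shows "0 \<le> u i"
proof -
  obtain P where P: "ranking_tensor n P" "\<forall>i. u i = (if i \<in> {1..n} then utility n mu v P i else 0)"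
    using assms(2) unfolding util_set_def by blast
  have expo: "0 \<le> expo n v P a b" if "a \<in> {1..n}" "b \<in> {1..n} - {a}" for a b
    unfolding expo_def using assms(1) P(1) that
    by (intro sum_nonneg) (auto simp: ranking_tensor_def rr_task_def)
  have mu: "0 \<le> mu a b" if "a \<in> {1..n}" "b \<in> {1..n} - {a}" for a b
    using assms(1) that unfolding rr_task_def by auto
  have "0 \<le> utility n mu v P i" if "i \<in> {1..n}"
    unfolding utility_def using that
    by (intro add_nonneg_nonneg sum_nonneg mult_nonneg_nonneg mu expo) auto
  then show ?thesis using P(2) by simp
qed

lemma exists_bij_betw_mapping:
  assumes "finite K" "finite J" "card K = card J" "k \<in> K" "j \<in> J"
  shows "\<exists>h. bij_betw h K J \<and> h k = j"
proof -
  obtain g where g: "bij_betw g K J"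
    using finite_same_card_bij assms(1-3) by blast
  have "bij_betw (Transposition.transpose (g k) j \<circ> g) K J"
    using g assms(4,5) by (intro bij_betw_trans[OF g]) (simp add: bij_betw_apply)
  then show ?thesis by (intro exI[of _ "Transposition.transpose (g k) j \<circ> g"]) simp
qed

lemma ranking_tensor_with_top:
  assumes "2 \<le> n" "\<And>i. i \<in> {1..n} \<Longrightarrow> t i \<in> {1..n} - {i}"
  shows "\<exists>P. ranking_tensor n P \<and> (\<forall>i\<in>{1..n}. \<forall>j. P i j 1 = (if j = t i then 1 else 0))"
proof -
  have "\<exists>h. bij_betw h {1..n-1} ({1..n} - {i}) \<and> h 1 = t i" if "i \<in> {1..n}" for i
    using assms that by (intro exists_bij_betw_mapping) auto
  then obtain H where H: "\<And>i. i \<in> {1..n} \<Longrightarrow> bij_betw (H i) {1..n-1} ({1..n} - {i}) \<and> H i 1 = t i"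
    by metis
  define P where "P = (\<lambda>i j k. if j = H i k then 1 else 0 :: real)"
  have "ranking_tensor n P"
    unfolding ranking_tensor_def
  proof (intro ballI conjI)
    fix i j k
    show "0 \<le> P i j k" unfolding P_def by simp
  next
    fix i j assume i: "i \<in> {1..n}" and j: "j \<in> {1..n} - {i}"
    have "(\<Sum>k\<in>{1..n-1}. P i j k) = (\<Sum>j'\<in>{1..n} - {i}. if j = j' then 1 else 0)"
      unfolding P_def using H[OF i] by (intro sum.reindex_bij_betw) auto
    then show "(\<Sum>k\<in>{1..n-1}. P i j k) = 1" using j by simp
  next
    fix i k assume i: "i \<in> {1..n}" and k: "k \<in> {1..n-1}"
    have "H i k \<in> {1..n} - {i}" using bij_betw_apply[OF conjunct1[OF H[OF i]] k] .
    then show "(\<Sum>j\<in>{1..n} - {i}. P i j k) = 1" unfolding P_def by simp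
  qed
  moreover have "P i j 1 = (if j = t i then 1 else 0)" if "i \<in> {1..n}" for i j
    using H[OF that] unfolding P_def by simp
  ultimately show ?thesis by blast
qed

lemma disp_pair_lower_bound:
  assumes "a \<in> {1..n}" "b \<in> {1..n}" "a \<noteq> b"
  shows "(u a + u b - 2 * (\<Sum>j\<in>{1..n}. u j) / n)\<^sup>2 \<le> 2 * real n * disp n u"
proof -
  define m where "m = (\<Sum>j\<in>{1..n}. u j) / n"
  have n: "0 < real n" using assms(1) by simp
  have "(u a + u b - 2 * m)\<^sup>2 \<le> 2 * ((u a - m)\<^sup>2 + (u b - m)\<^sup>2)"
    using zero_le_power2[of "u a - u b"] by (simp add: power2_eq_square algebra_simps)
  also have "(u a - m)\<^sup>2 + (u b - m)\<^sup>2 = (\<Sum>j\<in>{a, b}. (u j - m)\<^sup>2)"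
    using assms(3) by simp
  also have "\<dots> \<le> (\<Sum>j\<in>{1..n}. (u j - m)\<^sup>2)"
    using assms by (intro sum_mono2) auto
  also have "\<dots> = n * disp n u"
    unfolding disp_def m_def using n by simp
  finally show ?thesis unfolding m_def by simp
qed

lemma eq_opt_set_sum_ge:
  assumes "(\<lambda>_. 0) \<in> util_set n mu v" "s \<in> eq_opt_set n mu v \<beta>"
  shows "\<beta> * sqrt (disp n s) \<le> (\<Sum>i\<in>{1..n}. s i)"
proof -
  have "F_eq n \<beta> (\<lambda>_. 0) \<le> F_eq n \<beta> s"
    using assms unfolding eq_opt_set_def by blast
  then show ?thesis unfolding F_eq_def disp_def by simp
qed

lemma welfare_pos_exponent:
  "0 < \<alpha> \<Longrightarrow> welfare n \<alpha> u = ereal (\<Sum>i\<in>{1..n}. u i powr \<alpha>)"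
  unfolding welfare_def psi_def by simp

lemma welfare_nonpos_exponent_at_zero:
  assumes "\<alpha> \<le> 0" "i \<in> {1..n}" "u i = 0"
  shows "welfare n \<alpha> u = -\<infinity>"
proof -
  have "psi x \<alpha> \<noteq> \<infinity>" for x unfolding psi_def by auto
  then have "(\<Sum>j\<in>{1..n} - {i}. psi (u j) \<alpha>) \<noteq> \<infinity>"
    by (simp add: sum_Pinfty)
  moreover have "psi (u i) \<alpha> = -\<infinity>" using assms unfolding psi_def by simp
  ultimately show ?thesis
    unfolding welfare_def using assms(2) by (simp add: sum.remove)
qed

lemma welfare_finite_if_pos:
  assumes "\<forall>i\<in>{1..n}. 0 < u i"
  shows "\<exists>r. welfare n \<alpha> u = ereal r"
proof -
  have "\<exists>r. psi (u i) \<alpha> = ereal r" if "i \<in> {1..n}" for i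
  proof -
    have "u i \<noteq> 0" using assms that by force
    then show ?thesis unfolding psi_def by auto
  qed
  then obtain r where "\<And>i. i \<in> {1..n} \<Longrightarrow> psi (u i) \<alpha> = ereal (r i)" by metis
  then have "welfare n \<alpha> u = ereal (\<Sum>i\<in>{1..n}. r i)"
    unfolding welfare_def by simp
  then show ?thesis ..
qed

lemma exists_small_powr_gain:
  fixes \<alpha> K c :: real
  assumes "0 < \<alpha>" "\<alpha> < 1" "0 \<le> K" "0 < c"
  shows "\<exists>t. 0 < t \<and> t \<le> 1 \<and> t * K < (t * c) powr \<alpha>"
proof -
  define m where "m = min 1 (c powr \<alpha>)"
  define t where "t = (m / (K + 1)) powr (1 / (1 - \<alpha>))"
  have m: "0 < m" "m \<le> 1" "m \<le> c powr \<alpha>" using assms unfolding m_def by auto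
  have t: "0 < t" "t \<le> 1" unfolding t_def using m assms by (auto intro!: powr_le1)
  have "t powr (1 - \<alpha>) = m / (K + 1)"
    unfolding t_def powr_powr using m assms by simp
  then have "t = t powr \<alpha> * (m / (K + 1))"
    using powr_add[of t \<alpha> "1 - \<alpha>"] t by simp
  then have "t * (K + 1) = t powr \<alpha> * m" using assms by (simp add: field_simps)
  also have "\<dots> \<le> t powr \<alpha> * c powr \<alpha>" using m by (intro mult_left_mono) auto
  also have "\<dots> = (t * c) powr \<alpha>" using t assms by (simp add: powr_mult)
  finally show ?thesis using t by (intro exI[of _ t]) (simp add: algebra_simps)
qed

text \<open>The gain comes from the infinite slope of \<open>x powr \<alpha>\<close> at 0.\<close>

lemma powr_sum_mix_gain:
  fixes x y :: "nat \<Rightarrow> real"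
  assumes "0 < \<alpha>" "\<alpha> < 1" "finite A" "i \<in> A" "x i = 0" "0 < y i"
    and "\<And>j. j \<in> A \<Longrightarrow> 0 \<le> x j" "\<And>j. j \<in> A \<Longrightarrow> 0 \<le> y j"
  shows "\<exists>t. 0 \<le> t \<and> t \<le> 1 \<and>
    (\<Sum>j\<in>A. x j powr \<alpha>) < (\<Sum>j\<in>A. ((1 - t) * x j + t * y j) powr \<alpha>)"
proof -
  define K where "K = (\<Sum>j\<in>A. x j powr \<alpha>)"
  obtain t where t: "0 < t" "t \<le> 1" "t * K < (t * y i) powr \<alpha>"
    using exists_small_powr_gain[OF assms(1,2) _ assms(6)] unfolding K_def
    by (meson powr_ge_zero sum_nonneg)
  let ?z = "\<lambda>j. (1 - t) * x j + t * y j"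
  have rest: "(1 - t) * x j powr \<alpha> \<le> ?z j powr \<alpha>" if "j \<in> A" for j
  proof -
    have "1 - t \<le> (1 - t) powr \<alpha>"
      using powr_mono'[of \<alpha> 1 "1 - t"] t assms(2) by simp
    then have "(1 - t) * x j powr \<alpha> \<le> (1 - t) powr \<alpha> * x j powr \<alpha>"
      by (intro mult_right_mono) auto
    also have "\<dots> = ((1 - t) * x j) powr \<alpha>"
      using t assms(7)[OF that] by (simp add: powr_mult)
    also have "\<dots> \<le> ?z j powr \<alpha>"
      using t assms(1,7,8) that by (intro powr_mono2) auto
    finally show ?thesis .
  qed
  have top: "(t * y i) powr \<alpha> \<le> ?z i powr \<alpha>"
    using t assms by (intro powr_mono2) auto
  have "K = (1 - t) * K + t * K" by (simp add: algebra_simps)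
  also have "\<dots> < (\<Sum>j\<in>A - {i}. (1 - t) * x j powr \<alpha>) + (t * y i) powr \<alpha>"
    using t(3) assms(3-5) unfolding K_def by (simp add: sum_distrib_left sum.remove)
  also have "\<dots> \<le> (\<Sum>j\<in>A - {i}. ?z j powr \<alpha>) + ?z i powr \<alpha>"
    using rest top by (intro add_mono sum_mono) auto
  also have "\<dots> = (\<Sum>j\<in>A. ?z j powr \<alpha>)"
    using assms(3,4) by (simp add: sum.remove)
  finally show ?thesis using t unfolding K_def by (intro exI[of _ t]) auto
qed

lemma welfare_maximizer_pos:
  assumes "rr_task n mu v" "\<alpha> < 1" "welfare_maximizer n mu v \<alpha> ua"
    and "w \<in> util_set n mu v" "\<forall>i\<in>{1..n}. 0 < w i"
    and "i \<in> {1..n}"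
  shows "0 < ua i"
proof (rule ccontr)
  assume "\<not> 0 < ua i"
  have ua: "ua \<in> util_set n mu v"
    and max: "\<And>u. u \<in> util_set n mu v \<Longrightarrow> welfare n \<alpha> u \<le> welfare n \<alpha> ua"
    using assms(3) unfolding welfare_maximizer_def by auto
  have ua_i: "ua i = 0" using \<open>\<not> 0 < ua i\<close> util_set_nonneg[OF assms(1) ua, of i] by simp
  show False
  proof (cases "\<alpha> \<le> 0")
    case True
    obtain r where "welfare n \<alpha> w = ereal r" using welfare_finite_if_pos assms(5) by blast
    then show False
      using max[OF assms(4)] welfare_nonpos_exponent_at_zero[OF True assms(6), of ua] ua_i by simp
  next
    case False
    then obtain t where t: "0 \<le> t" "t \<le> 1" and gain:
      "(\<Sum>j\<in>{1..n}. ua j powr \<alpha>) < (\<Sum>j\<in>{1..n}. ((1 - t) * ua j + t * w j) powr \<alpha>)"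
      using powr_sum_mix_gain[of \<alpha> "{1..n}" i ua w] assms(2,5,6) ua_i
        util_set_nonneg[OF assms(1) ua] util_set_nonneg[OF assms(1,4)]
      by auto
    have "(\<lambda>j. (1 - t) * ua j + t * w j) \<in> util_set n mu v"
      using util_set_convex[OF ua assms(4) t] .
    then show False
      using max gain False by (fastforce simp: welfare_pos_exponent)
  qed
qed

definition two_vs_rest_pref :: "nat \<Rightarrow> nat \<Rightarrow> real" where
  "two_vs_rest_pref i j = (if (i \<le> 2) = (j \<le> 2) then 0 else 1)"

definition top_exposure :: "nat \<Rightarrow> real" where
  "top_exposure k = (if k = 1 then 1 else 0)"

lemma two_vs_rest_pref_commute: "two_vs_rest_pref i j = two_vs_rest_pref j i"
  unfolding two_vs_rest_pref_def by simp

lemma rr_task_two_vs_rest: "rr_task n two_vs_rest_pref top_exposure"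
  unfolding rr_task_def two_vs_rest_pref_def top_exposure_def by auto

lemma expo_top_exposure: "2 \<le> n \<Longrightarrow> expo n top_exposure P i j = P i j 1"
  unfolding expo_def top_exposure_def by (simp add: if_distrib cong: if_cong)

lemma sum_two_vs_rest_pref_first:
  assumes "a \<in> {1, 2}" "2 \<le> n"
  shows "(\<Sum>j\<in>{1..n} - {a}. two_vs_rest_pref a j * f j) = (\<Sum>j\<in>{3..n}. f j)"
proof -
  have "(\<Sum>j\<in>{1..n} - {a}. two_vs_rest_pref a j * f j) = (\<Sum>j\<in>{3..n}. two_vs_rest_pref a j * f j)"
    using assms by (intro sum.mono_neutral_right) (auto simp: two_vs_rest_pref_def)
  also have "\<dots> = (\<Sum>j\<in>{3..n}. f j)"
    using assms by (intro sum.cong) (auto simp: two_vs_rest_pref_def)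
  finally show ?thesis .
qed

lemma sum_two_vs_rest_pref_rest:
  assumes "b \<in> {3..n}"
  shows "(\<Sum>j\<in>{1..n} - {b}. two_vs_rest_pref b j * f j) = f 1 + f 2"
proof -
  have "(\<Sum>j\<in>{1..n} - {b}. two_vs_rest_pref b j * f j) = (\<Sum>j\<in>{1, 2}. two_vs_rest_pref b j * f j)"
    using assms by (intro sum.mono_neutral_right) (auto simp: two_vs_rest_pref_def)
  then show ?thesis using assms by (simp add: two_vs_rest_pref_def)
qed

lemma utility_two_vs_rest_balance:
  assumes "2 \<le> n"
  shows "utility n two_vs_rest_pref v P 1 + utility n two_vs_rest_pref v P 2
    = (\<Sum>b\<in>{3..n}. utility n two_vs_rest_pref v P b)"
proof -
  let ?e = "expo n v P"
  have "(\<Sum>b\<in>{3..n}. utility n two_vs_rest_pref v P b)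
      = (\<Sum>b\<in>{3..n}. (?e b 1 + ?e b 2) + (?e 1 b + ?e 2 b))"
    unfolding utility_def by (intro sum.cong refl) (simp only: sum_two_vs_rest_pref_rest)
  moreover have "utility n two_vs_rest_pref v P a = (\<Sum>b\<in>{3..n}. ?e a b) + (\<Sum>b\<in>{3..n}. ?e b a)"
    if "a \<in> {1, 2}" for a
    unfolding utility_def using that assms by (simp only: sum_two_vs_rest_pref_first)
  ultimately show ?thesis by (simp add: sum.distrib)
qed

lemma util_set_two_vs_rest_half:
  assumes "u \<in> util_set n two_vs_rest_pref v" "2 \<le> n"
  shows "u 1 + u 2 = (\<Sum>i\<in>{1..n}. u i) / 2"
proof -
  obtain P where P: "\<forall>i. u i = (if i \<in> {1..n} then utility n two_vs_rest_pref v P i else 0)"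
    using assms(1) unfolding util_set_def by blast
  have "{1..n} = {1, 2} \<union> {3..n}" using assms(2) by auto
  then have "(\<Sum>i\<in>{1..n}. u i) = u 1 + u 2 + (\<Sum>i\<in>{3..n}. u i)"
    by (simp add: sum.union_disjoint)
  moreover have "(\<Sum>i\<in>{3..n}. u i) = u 1 + u 2"
    using P assms(2) utility_two_vs_rest_balance[OF assms(2), of v P] by simp
  ultimately show ?thesis by simp
qed

lemma sum_sq_le_disp_two_vs_rest:
  assumes "u \<in> util_set n two_vs_rest_pref v" "5 \<le> n"
  shows "(\<Sum>i\<in>{1..n}. u i)\<^sup>2 \<le> 8 * real n ^ 3 * disp n u"
proof -
  define S where "S = (\<Sum>i\<in>{1..n}. u i)"
  have n: "5 \<le> real n" using assms(2) by simp
  have half: "u 1 + u 2 = S / 2"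
    unfolding S_def using util_set_two_vs_rest_half[OF assms(1)] assms(2) by simp
  have "S / 2 - 2 * S / n = S * (real n - 4) / (2 * n)"
    using n by (simp add: field_simps)
  then have half_dev: "u 1 + u 2 - 2 * S / n = S * (real n - 4) / (2 * n)"
    by (simp only: half)
  have "1 \<le> (real n - 4)\<^sup>2" using n by (simp add: one_le_power)
  then have "S\<^sup>2 * 1 \<le> S\<^sup>2 * (real n - 4)\<^sup>2" by (intro mult_left_mono) auto
  then have "S\<^sup>2 / (4 * (real n)\<^sup>2) \<le> (S * (real n - 4) / (2 * n))\<^sup>2"
    by (simp add: power_divide power_mult_distrib divide_right_mono)
  also have "\<dots> = (u 1 + u 2 - 2 * S / n)\<^sup>2" by (simp only: half_dev)
  also have "\<dots> \<le> 2 * real n * disp n u"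
    unfolding S_def using assms(2) by (intro disp_pair_lower_bound) auto
  finally have "4 * (real n)\<^sup>2 * (S\<^sup>2 / (4 * (real n)\<^sup>2)) \<le> 4 * (real n)\<^sup>2 * (2 * real n * disp n u)"
    by (intro mult_left_mono) auto
  then show ?thesis using n unfolding S_def by (simp add: power2_eq_square power3_eq_cube)
qed

lemma zero_in_util_set_two_vs_rest:
  assumes "4 \<le> n"
  shows "(\<lambda>_. 0) \<in> util_set n two_vs_rest_pref top_exposure"
proof -
  define t :: "nat \<Rightarrow> nat" where "t i = (if i = 1 then 2 else if i = 2 then 1 else if i = 3 then 4 else 3)" for i :: nat
  have top: "\<And>i. i \<in> {1..n} \<Longrightarrow> t i \<in> {1..n} - {i}" using assms by (auto simp: t_def)
  obtain P where P: "ranking_tensor n P" "\<forall>i\<in>{1..n}. \<forall>j. P i j 1 = (if j = t i then 1 else 0)"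
    using ranking_tensor_with_top[OF _ top] assms by auto
  have no_cross: "two_vs_rest_pref a b * expo n top_exposure P a b = 0" if "a \<in> {1..n}" for a b
    using assms that P(2) by (auto simp: expo_top_exposure two_vs_rest_pref_def t_def)
  have "utility n two_vs_rest_pref top_exposure P i = 0" if "i \<in> {1..n}" for i
  proof -
    have "(\<Sum>j\<in>{1..n} - {i}. two_vs_rest_pref i j * expo n top_exposure P i j) = 0"
      using no_cross[OF that] by (intro sum.neutral) blast
    moreover have "(\<Sum>j\<in>{1..n} - {i}. two_vs_rest_pref i j * expo n top_exposure P j i) = 0"
      using no_cross by (intro sum.neutral ballI) (metis DiffD1 two_vs_rest_pref_commute)
    ultimately show ?thesis unfolding utility_def by simp
  qed
  then show ?thesis unfolding util_set_def using P(1) by auto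
qed

lemma exists_pos_in_util_set_two_vs_rest:
  assumes "3 \<le> n"
  shows "\<exists>w\<in>util_set n two_vs_rest_pref top_exposure. \<forall>i\<in>{1..n}. 0 < w i"
proof -
  define t :: "nat \<Rightarrow> nat" where "t i = (if i \<le> 2 then 3 else 1)" for i :: nat
  have top: "\<And>i. i \<in> {1..n} \<Longrightarrow> t i \<in> {1..n} - {i}" using assms by (auto simp: t_def)
  obtain P where P: "ranking_tensor n P" "\<forall>i\<in>{1..n}. \<forall>j. P i j 1 = (if j = t i then 1 else 0)"
    using ranking_tensor_with_top[OF _ top] assms by auto
  define w where "w i = (if i \<in> {1..n} then utility n two_vs_rest_pref top_exposure P i else 0)" for i
  have "w \<in> util_set n two_vs_rest_pref top_exposure"
    unfolding util_set_def w_def using P(1) by auto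
  moreover have "0 < w i" if i: "i \<in> {1..n}" for i
  proof -
    have ti: "t i \<in> {1..n} - {i}" using assms i by (auto simp: t_def)
    have term_nonneg: "0 \<le> two_vs_rest_pref a b * expo n top_exposure P a b" if "a \<in> {1..n}" for a b
      using P(2) assms that by (simp add: expo_top_exposure two_vs_rest_pref_def)
    have "0 < two_vs_rest_pref i (t i) * expo n top_exposure P i (t i)"
      using P(2) i assms by (simp add: expo_top_exposure two_vs_rest_pref_def t_def)
    also have "\<dots> \<le> (\<Sum>j\<in>{1..n} - {i}. two_vs_rest_pref i j * expo n top_exposure P i j)"
      using ti i term_nonneg by (intro member_le_sum) auto
    also have "\<dots> \<le> w i"
    proof -
      have "0 \<le> (\<Sum>j\<in>{1..n} - {i}. two_vs_rest_pref i j * expo n top_exposure P j i)"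
        by (intro sum_nonneg) (simp add: two_vs_rest_pref_commute[of i] term_nonneg)
      then show ?thesis unfolding w_def utility_def using i by simp
    qed
    finally show ?thesis .
  qed
  ultimately show ?thesis by blast
qed

lemma eq_opt_set_two_vs_rest_vanishes:
  assumes "5 \<le> n" "8 * real n ^ 3 < \<beta>"
    and "s \<in> eq_opt_set n two_vs_rest_pref top_exposure \<beta>" "i \<in> {1..n}"
  shows "s i = 0"
proof -
  have "1 \<le> real n ^ 3" using assms(1) by (simp add: one_le_power)
  then have "1 \<le> \<beta>" using assms(2) by linarith
  then have "\<beta> \<le> \<beta> * \<beta>" using mult_left_mono[of 1 \<beta> \<beta>] by simp
  then have \<beta>: "0 \<le> \<beta>" "8 * real n ^ 3 < \<beta>\<^sup>2"
    unfolding power2_eq_square using assms(2) \<open>1 \<le> \<beta>\<close> by linarith+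
  define S where "S = (\<Sum>i\<in>{1..n}. s i)"
  define D where "D = disp n s"
  have s: "s \<in> util_set n two_vs_rest_pref top_exposure"
    using assms(3) unfolding eq_opt_set_def by blast
  have D: "0 \<le> D" unfolding D_def disp_def by (simp add: sum_nonneg)
  have zero: "(\<lambda>_. 0) \<in> util_set n two_vs_rest_pref top_exposure"
    using assms(1) by (intro zero_in_util_set_two_vs_rest) simp
  have "\<beta> * sqrt D \<le> S"
    unfolding S_def D_def by (rule eq_opt_set_sum_ge[OF zero assms(3)])
  then have "(\<beta> * sqrt D)\<^sup>2 \<le> S\<^sup>2" using \<beta>(1) D by (intro power_mono) auto
  then have lower: "\<beta>\<^sup>2 * D \<le> S\<^sup>2" using D by (simp add: power_mult_distrib)
  have upper: "S\<^sup>2 \<le> 8 * real n ^ 3 * D"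
    unfolding S_def D_def by (rule sum_sq_le_disp_two_vs_rest[OF s assms(1)])
  have "D = 0"
  proof (rule ccontr)
    assume "D \<noteq> 0"
    then have "8 * real n ^ 3 * D < \<beta>\<^sup>2 * D" using D \<beta>(2) by (intro mult_strict_right_mono) auto
    then show False using lower upper by linarith
  qed
  then have "S = 0" using upper by simp
  then show ?thesis
    unfolding S_def using util_set_nonneg[OF rr_task_two_vs_rest s] assms(4)
    by (simp add: sum_nonneg_eq_0_iff)
qed

theorem proposition3:
  fixes n :: nat
  assumes "n \<ge> 5"
  shows "\<exists>(mu :: nat \<Rightarrow> nat \<Rightarrow> real) (v :: nat \<Rightarrow> real). rr_task n mu v \<and>
    (\<forall>\<alpha>::real. \<alpha> < 1 \<longrightarrow> (\<forall>ua. welfare_maximizer n mu v \<alpha> ua \<longrightarrow>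
      (\<forall>s :: real \<Rightarrow> nat \<Rightarrow> real. (\<forall>\<beta>>0. s \<beta> \<in> eq_opt_set n mu v \<beta>) \<longrightarrow>
         (\<exists>\<beta>>0. \<forall>i\<in>{1..n}. ua i > s \<beta> i) \<and>
         ((\<lambda>\<beta>. \<Sum>i\<in>{1..n}. s \<beta> i) \<longlongrightarrow> 0) at_top)))"
proof (intro exI[of _ two_vs_rest_pref] exI[of _ top_exposure] conjI[OF rr_task_two_vs_rest] allI impI)
  fix \<alpha> :: real and ua and s :: "real \<Rightarrow> nat \<Rightarrow> real"
  assume "\<alpha> < 1" and max: "welfare_maximizer n two_vs_rest_pref top_exposure \<alpha> ua"
    and opt: "\<forall>\<beta>>0. s \<beta> \<in> eq_opt_set n two_vs_rest_pref top_exposure \<beta>"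
  have vanishes: "s \<beta> i = 0" if "8 * real n ^ 3 < \<beta>" "i \<in> {1..n}" for \<beta> i
  proof -
    have "0 \<le> real n ^ 3" by simp
    then have "0 < \<beta>" using that(1) by linarith
    then have "s \<beta> \<in> eq_opt_set n two_vs_rest_pref top_exposure \<beta>" using opt by simp
    then show ?thesis by (rule eq_opt_set_two_vs_rest_vanishes[OF assms that(1) _ that(2)])
  qed
  obtain w where "w \<in> util_set n two_vs_rest_pref top_exposure" "\<forall>i\<in>{1..n}. 0 < w i"
    using exists_pos_in_util_set_two_vs_rest[of n] assms by auto
  then have "0 < ua i" if "i \<in> {1..n}" for i
    using welfare_maximizer_pos[OF rr_task_two_vs_rest \<open>\<alpha> < 1\<close> max _ _ that] by blast
  then have "\<exists>\<beta>>0. \<forall>i\<in>{1..n}. ua i > s \<beta> i"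
    using vanishes[of "8 * real n ^ 3 + 1"] by (intro exI[of _ "8 * real n ^ 3 + 1"]) (auto simp: add_nonneg_pos)
  moreover have "\<forall>\<^sub>F \<beta> in at_top. (\<Sum>i\<in>{1..n}. s \<beta> i) = 0"
    using eventually_gt_at_top[of "8 * real n ^ 3"] by eventually_elim (simp add: vanishes)
  then have "((\<lambda>\<beta>. \<Sum>i\<in>{1..n}. s \<beta> i) \<longlongrightarrow> 0) at_top"
    by (rule tendsto_eventually)
  ultimately show "(\<exists>\<beta>>0. \<forall>i\<in>{1..n}. ua i > s \<beta> i) \<and> ((\<lambda>\<beta>. \<Sum>i\<in>{1..n}. s \<beta> i) \<longlongrightarrow> 0) at_top" ..
qed

end
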